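(* Let $(p_{ij})_{i,j\in\{0,1\}}$ be a transition matrix with all $p_{ij}\in(0,1)$ and $p_{ij}\ne\tfrac12$ for some $(i,j)$; for $i\in\{0,1\}$ let $I_n^i\sim B(n,p_{i0})$. Let $(X_n^i,Z_n^i)_{n\in\mathbb N_0}$, $i\in\{0,1\}$, be random variables with finite second moments such that $X_n^i=Z_n^i=0$ for $n\le1$ and, for all $n\ge2$ and $i\in\{0,1\}$, $$\begin{pmatrix}X_n^i\\ Z_n^i\end{pmatrix}\stackrel{d}{=}\begin{pmatrix}X^0_{I_n^i}\\ Z^0_{I_n^i}\end{pmatrix}+\begin{pmatrix}X^1_{n-I_n^i}\\ Z^1_{n-I_n^i}\end{pmatrix}+\begin{pmatrix}\eta_n^{i,1}\\ \eta_n^{i,2}\end{pmatrix},$$ with $(X^0_k,Z^0_k)_{k\le n}$, $(X^1_k,Z^1_k)_{k\le n}$, $I_n^i$ independent on the right, and $$\eta_n^{i,1}=\frac1H\Big(n\log n-\mathbb E\big[I_n^i\log I_n^i+(n-I_n^i)\log(n-I_n^i)\big]\Big)+\pi_{1-i}\frac{H_{1-i}-H_i}{H}n+\frac{H_1-H_0}{(p_{01}+p_{10})H}p_{i0}p_{i1}^{n-1}n,\quad \eta_n^{i,2}=n-\eta_n^{i,1}.$$ Let $\nu_Z^i(n)=\mathbb E[Z_n^i]$. Then there exists $C>0$ such that for $i\in\{0,1\}$ and all $n,m\in\mathbb N_0$, $|\nu_Z^i(n)-\nu_Z^i(m)|\le C|n-m|$.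
   Context: $0\log0:=0$. $\pi_0=p_{10}/(p_{01}+p_{10})$, $\pi_1=p_{01}/(p_{01}+p_{10})$, $H_i=-\sum_jp_{ij}\log p_{ij}$, $H=\pi_0H_0+\pi_1H_1$. *)

theory Defs
  imports "HOL-Probability.Probability"
begin

text \<open>Natural logarithm is used; the base is irrelevant since only ratios occur.
  Note ln 0 = 0 in Isabelle, so 0 * ln 0 = 0 matches the convention 0 log 0 := 0.\<close>

definition xlogx :: "real \<Rightarrow> real" where
  "xlogx x = x * ln x"

definition Hent :: "(nat \<Rightarrow> nat \<Rightarrow> real) \<Rightarrow> nat \<Rightarrow> real" where
  "Hent p i = - (\<Sum>j<2. xlogx (p i j))"

definition statpi :: "(nat \<Rightarrow> nat \<Rightarrow> real) \<Rightarrow> nat \<Rightarrow> real" where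
  "statpi p i = (if i = 0 then p 1 0 / (p 0 1 + p 1 0) else p 0 1 / (p 0 1 + p 1 0))"

definition Htot :: "(nat \<Rightarrow> nat \<Rightarrow> real) \<Rightarrow> real" where
  "Htot p = statpi p 0 * Hent p 0 + statpi p 1 * Hent p 1"

definition eta1 :: "(nat \<Rightarrow> nat \<Rightarrow> real) \<Rightarrow> nat \<Rightarrow> nat \<Rightarrow> real" where
  "eta1 p i n =
     (1 / Htot p) * (xlogx (real n)
        - measure_pmf.expectation (binomial_pmf n (p i 0))
            (\<lambda>k. xlogx (real k) + xlogx (real (n - k))))
     + statpi p (1 - i) * (Hent p (1 - i) - Hent p i) / Htot p * real n
     + (Hent p 1 - Hent p 0) / ((p 0 1 + p 1 0) * Htot p) * p i 0 * p i 1 ^ (n - 1) * real n"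

definition eta2 :: "(nat \<Rightarrow> nat \<Rightarrow> real) \<Rightarrow> nat \<Rightarrow> nat \<Rightarrow> real" where
  "eta2 p i n = real n - eta1 p i n"

end

theory Submission
  imports Defs "HOL-Real_Asymp.Real_Asymp"
begin

text \<open>Taking expectations in the distributional recursion turns the means \<open>a\<^sub>i(n) = E Z\<^sub>n\<^sup>i\<close>
  into a coupled binomial recursion \<open>a\<^sub>i(n) = E[a\<^sub>0(I) + a\<^sub>1(n - I)] + \<eta>\<^sub>n\<^sup>i\<^sup>,\<^sup>2\<close>,
  \<open>I ~ Bin(n, p\<^sub>i\<^sub>0)\<close>. Pascal's rule shows that the increments \<open>d\<^sub>i(n) = a\<^sub>i(n + 1) - a\<^sub>i(n)\<close>
  satisfy the same kind of recursion, with \<open>d\<^sub>0\<close> and \<open>d\<^sub>1\<close> averaged with weights \<open>p\<^sub>i\<^sub>0\<close> and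
  \<open>p\<^sub>i\<^sub>1\<close> and toll \<open>\<eta>\<^sub>n\<^sub>+\<^sub>1\<^sup>i\<^sup>,\<^sup>2 - \<eta>\<^sub>n\<^sup>i\<^sup>,\<^sup>2\<close>. The drift \<open>\<pi>\<^sub>1\<^sub>-\<^sub>i(H\<^sub>1\<^sub>-\<^sub>i - H\<^sub>i)/H\<close> in the toll is chosen
  so that the linear growth \<open>H\<^sub>i n / H\<close> of the entropy term cancels exactly, leaving toll increments
  of order \<open>1/n\<close>. A maximum-principle induction against the comparison sequence \<open>A - B/(n + 1)\<close>
  then bounds the increments uniformly, and telescoping gives the Lipschitz bound.\<close>

section \<open>Binomial averages\<close>

definition binom_avg :: "real \<Rightarrow> nat \<Rightarrow> (nat \<Rightarrow> real) \<Rightarrow> real" where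
  "binom_avg q n f = (\<Sum>k\<le>n. real (n choose k) * q ^ k * (1 - q) ^ (n - k) * f k)"

lemma binom_avg_add: "binom_avg q n (\<lambda>k. f k + g k) = binom_avg q n f + binom_avg q n g"
  by (simp add: binom_avg_def sum.distrib algebra_simps)

lemma binom_avg_diff: "binom_avg q n (\<lambda>k. f k - g k) = binom_avg q n f - binom_avg q n g"
  by (simp add: binom_avg_def sum_subtractf algebra_simps)

lemma binom_avg_cmult: "binom_avg q n (\<lambda>k. c * f k) = c * binom_avg q n f"
  by (simp add: binom_avg_def sum_distrib_left algebra_simps)

lemma binom_avg_const: "binom_avg q n (\<lambda>k. c) = c"
proof -
  have "(\<Sum>k\<le>n. real (n choose k) * q ^ k * (1 - q) ^ (n - k)) = (q + (1 - q)) ^ n"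
    by (subst binomial_ring) (simp add: atLeast0AtMost)
  then show ?thesis by (simp add: binom_avg_def sum_distrib_right[symmetric])
qed

lemma binom_avg_cong: "(\<And>k. k \<le> n \<Longrightarrow> f k = g k) \<Longrightarrow> binom_avg q n f = binom_avg q n g"
  by (simp add: binom_avg_def)

lemma binom_avg_mono:
  assumes "0 \<le> q" "q \<le> 1" "\<And>k. k \<le> n \<Longrightarrow> f k \<le> g k"
  shows "binom_avg q n f \<le> binom_avg q n g"
  unfolding binom_avg_def using assms by (intro sum_mono mult_left_mono) auto

lemma binom_avg_abs:
  assumes "0 \<le> q" "q \<le> 1"
  shows "\<bar>binom_avg q n f\<bar> \<le> binom_avg q n (\<lambda>k. \<bar>f k\<bar>)"
  unfolding binom_avg_def using assms
  by (intro order_trans[OF sum_abs] sum_mono) (simp add: abs_mult)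

lemma binom_avg_reflect: "binom_avg q n (\<lambda>k. f (n - k)) = binom_avg (1 - q) n f"
  unfolding binom_avg_def
  by (rule sum.reindex_bij_witness[where i="\<lambda>k. n - k" and j="\<lambda>k. n - k"])
     (auto simp: binomial_symmetric[symmetric] algebra_simps)

lemma binom_avg_indicator_top: "binom_avg q n (\<lambda>k. if k = n then c else 0) = q ^ n * c"
  by (simp add: binom_avg_def if_distrib sum.delta cong: if_cong)

lemma binom_avg_indicator_bot: "binom_avg q n (\<lambda>k. if k = 0 then c else 0) = (1 - q) ^ n * c"
  by (simp add: binom_avg_def if_distrib sum.delta cong: if_cong)

text \<open>Pascal's rule, read as conditioning on the last of the \<open>n + 1\<close> Bernoulli trials.\<close>
lemma binom_avg_Suc:
  "binom_avg q (Suc n) f = binom_avg q n (\<lambda>k. q * f (Suc k) + (1 - q) * f k)"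
proof -
  let ?r = "1 - q"
  have s1: "binom_avg q (Suc n) f = ?r ^ Suc n * f 0 +
      (\<Sum>k\<le>n. real (n choose k) * q ^ Suc k * ?r ^ (n - k) * f (Suc k)) +
      (\<Sum>k\<le>n. real (n choose Suc k) * q ^ Suc k * ?r ^ (n - k) * f (Suc k))"
    unfolding binom_avg_def by (subst sum.atMost_Suc_shift) (simp add: sum.distrib algebra_simps)
  have "?r ^ Suc n * f 0 + (\<Sum>k\<le>n. real (n choose Suc k) * q ^ Suc k * ?r ^ (n - k) * f (Suc k))
      = (\<Sum>k\<le>Suc n. real (n choose k) * q ^ k * ?r ^ (Suc n - k) * f k)"
    by (subst sum.atMost_Suc_shift) simp
  also have "\<dots> = (\<Sum>k\<le>n. real (n choose k) * q ^ k * ?r ^ (Suc n - k) * f k)"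
    by simp
  also have "\<dots> = (\<Sum>k\<le>n. real (n choose k) * q ^ k * ?r ^ (n - k) * (?r * f k))"
    by (intro sum.cong refl) (simp add: Suc_diff_le)
  finally have s2: "?r ^ Suc n * f 0 + (\<Sum>k\<le>n. real (n choose Suc k) * q ^ Suc k * ?r ^ (n - k) * f (Suc k))
      = (\<Sum>k\<le>n. real (n choose k) * q ^ k * ?r ^ (n - k) * (?r * f k))" .
  have s3: "binom_avg q n (\<lambda>k. q * f (Suc k) + ?r * f k)
     = (\<Sum>k\<le>n. real (n choose k) * q ^ Suc k * ?r ^ (n - k) * f (Suc k))
      + (\<Sum>k\<le>n. real (n choose k) * q ^ k * ?r ^ (n - k) * (?r * f k))"
    unfolding binom_avg_def sum.distrib[symmetric] by (intro sum.cong refl) (simp add: algebra_simps)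
  show ?thesis using s1 s2 s3 by simp
qed

lemma binom_avg_real: "binom_avg q n real = real n * q"
proof (induction n)
  case 0
  then show ?case by (simp add: binom_avg_def)
next
  case (Suc n)
  have "binom_avg q (Suc n) real = binom_avg q n (\<lambda>k. real k + q)"
    by (subst binom_avg_Suc) (simp add: algebra_simps)
  also have "\<dots> = real n * q + q" by (simp add: binom_avg_add binom_avg_const Suc)
  finally show ?case by (simp add: algebra_simps)
qed

lemma binom_avg_convolution_Suc:
  "binom_avg q (Suc n) (\<lambda>k. f k + g (Suc n - k)) - binom_avg q n (\<lambda>k. f k + g (n - k))
   = binom_avg q n (\<lambda>k. q * (f (Suc k) - f k) + (1 - q) * (g (Suc (n - k)) - g (n - k)))"
proof -
  have "binom_avg q (Suc n) (\<lambda>k. f k + g (Suc n - k))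
     = binom_avg q n (\<lambda>k. q * (f (Suc k) + g (n - k)) + (1 - q) * (f k + g (Suc (n - k))))"
    by (subst binom_avg_Suc) (intro binom_avg_cong, simp add: Suc_diff_le)
  also have "\<dots> - binom_avg q n (\<lambda>k. f k + g (n - k))
     = binom_avg q n (\<lambda>k. q * (f (Suc k) - f k) + (1 - q) * (g (Suc (n - k)) - g (n - k)))"
    unfolding binom_avg_diff[symmetric] by (intro binom_avg_cong) (simp add: algebra_simps)
  finally show ?thesis .
qed

lemma binom_avg_reciprocal:
  "q * binom_avg q n (\<lambda>k. 1 / (real k + 1)) = (1 - (1 - q) ^ Suc n) / (real n + 1)"
proof -
  let ?r = "1 - q"
  have "(real n + 1) * (q * binom_avg q n (\<lambda>k. 1 / (real k + 1)))
      = (\<Sum>k\<le>n. real (Suc n choose Suc k) * q ^ Suc k * ?r ^ (n - k))"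
    unfolding binom_avg_def sum_distrib_left
  proof (intro sum.cong refl)
    fix k
    have "real (Suc n) * real (n choose k) = real (Suc n choose Suc k) * real (Suc k)"
      using Suc_times_binomial_eq[of n k] by (metis of_nat_mult)
    then have "real (n choose k) * (real n + 1) / (real k + 1) = real (Suc n choose Suc k)"
      by (simp add: field_simps)
    moreover have "(real n + 1) * (q * (real (n choose k) * q ^ k * ?r ^ (n - k) * (1 / (real k + 1))))
        = (real (n choose k) * (real n + 1) / (real k + 1)) * q ^ Suc k * ?r ^ (n - k)"
      by (simp add: field_simps)
    ultimately show "(real n + 1) * (q * (real (n choose k) * q ^ k * ?r ^ (n - k) * (1 / (real k + 1))))
        = real (Suc n choose Suc k) * q ^ Suc k * ?r ^ (n - k)"
      by simp
  qed
  also have "\<dots> = (\<Sum>k\<le>Suc n. real (Suc n choose k) * q ^ k * ?r ^ (Suc n - k)) - ?r ^ Suc n"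
    by (subst sum.atMost_Suc_shift) simp
  also have "(\<Sum>k\<le>Suc n. real (Suc n choose k) * q ^ k * ?r ^ (Suc n - k)) = 1"
    using binomial_ring[of q ?r "Suc n"] by (simp add: atLeast0AtMost)
  finally show ?thesis by (simp add: field_simps)
qed

lemma set_pmf_binomial_subset: "0 \<le> q \<Longrightarrow> q \<le> 1 \<Longrightarrow> set_pmf (binomial_pmf n q) \<subseteq> {..n}"
  by (auto simp: set_pmf_binomial_eq split: if_splits)

lemma expectation_binomial_eq_binom_avg:
  assumes "0 \<le> q" "q \<le> 1"
  shows "measure_pmf.expectation (binomial_pmf n q) f = binom_avg q n f"
proof -
  have "measure_pmf.expectation (binomial_pmf n q) f = (\<Sum>k\<le>n. pmf (binomial_pmf n q) k *\<^sub>R f k)"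
    by (rule integral_measure_pmf) (use set_pmf_binomial_subset[OF assms] in auto)
  then show ?thesis using assms by (simp add: binom_avg_def)
qed

lemma sum_pmf_binomial_eq_binom_avg:
  assumes "0 \<le> q" "q \<le> 1"
  shows "(\<Sum>k\<in>set_pmf (binomial_pmf n q). pmf (binomial_pmf n q) k * f k) = binom_avg q n f"
proof -
  have "(\<Sum>k\<in>set_pmf (binomial_pmf n q). pmf (binomial_pmf n q) k * f k)
      = (\<Sum>k\<le>n. pmf (binomial_pmf n q) k * f k)"
    by (rule sum.mono_neutral_left) (use set_pmf_binomial_subset[OF assms] in \<open>auto simp: set_pmf_eq\<close>)
  then show ?thesis using assms by (simp add: binom_avg_def)
qed

section \<open>Expectations on the product space\<close>

lemma distr_pair_snd_prob:
  assumes "prob_space A" "prob_space B"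
  shows "distr (A \<Otimes>\<^sub>M B) B snd = B"
proof (intro measure_eqI)
  interpret A: prob_space A by fact
  interpret B: prob_space B by fact
  fix X assume X: "X \<in> sets (distr (A \<Otimes>\<^sub>M B) B snd)"
  then have "emeasure (distr (A \<Otimes>\<^sub>M B) B snd) X = emeasure (A \<Otimes>\<^sub>M B) (space A \<times> X)"
    by (auto simp: emeasure_distr space_pair_measure dest: sets.sets_into_space
        intro!: arg_cong2[where f=emeasure])
  with X show "emeasure (distr (A \<Otimes>\<^sub>M B) B snd) X = emeasure B X"
    by (simp add: B.emeasure_pair_measure_Times A.emeasure_space_1)
qed simp

lemma integral_comp_snd_pair_prob:
  fixes g :: "'b \<Rightarrow> real"
  assumes A: "prob_space A" and B: "prob_space B" and g: "integrable B g"
  shows "integrable (A \<Otimes>\<^sub>M B) (\<lambda>x. g (snd x))"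
    and "integral\<^sup>L (A \<Otimes>\<^sub>M B) (\<lambda>x. g (snd x)) = integral\<^sup>L B g"
proof -
  have g_meas: "g \<in> borel_measurable B" using g by auto
  have "integrable (distr (A \<Otimes>\<^sub>M B) B snd) g" using distr_pair_snd_prob[OF A B] g by simp
  then show "integrable (A \<Otimes>\<^sub>M B) (\<lambda>x. g (snd x))"
    using integrable_distr_eq[OF measurable_snd[of A B] g_meas] by simp
  have "integral\<^sup>L (distr (A \<Otimes>\<^sub>M B) B snd) g = integral\<^sup>L (A \<Otimes>\<^sub>M B) (\<lambda>x. g (snd x))"
    by (rule integral_distr[OF measurable_snd g_meas])
  then show "integral\<^sup>L (A \<Otimes>\<^sub>M B) (\<lambda>x. g (snd x)) = integral\<^sup>L B g"
    using distr_pair_snd_prob[OF A B] by simp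
qed

lemma integral_pair_measure_pmf:
  fixes F :: "nat \<Rightarrow> 'a \<Rightarrow> real"
  assumes A: "prob_space A" and fin: "finite (set_pmf P)" and F: "\<And>k. integrable A (F k)"
  shows "integrable (A \<Otimes>\<^sub>M measure_pmf P) (\<lambda>x. F (snd x) (fst x))"
    and "integral\<^sup>L (A \<Otimes>\<^sub>M measure_pmf P) (\<lambda>x. F (snd x) (fst x))
          = (\<Sum>k\<in>set_pmf P. pmf P k * integral\<^sup>L A (F k))"
proof -
  interpret A: prob_space A by fact
  interpret pair_sigma_finite A "measure_pmf P"
    by (intro pair_sigma_finite.intro A.sigma_finite_measure_axioms measure_pmf.sigma_finite_measure_axioms)
  have snd_meas: "snd \<in> measurable (A \<Otimes>\<^sub>M measure_pmf P) (count_space UNIV)"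
    using measurable_snd[of A "measure_pmf P"] by (simp add: measurable_cong_sets)
  have meas: "(\<lambda>x. F (snd x) (fst x)) \<in> borel_measurable (A \<Otimes>\<^sub>M measure_pmf P)"
    by (rule measurable_compose_countable'[where I=UNIV and g=snd and f="\<lambda>k x. F k (fst x)"])
       (use borel_measurable_integrable[OF F] snd_meas in auto)
  have inner: "(\<integral>y. norm (F (snd (x, y)) (fst (x, y))) \<partial>measure_pmf P)
        = (\<Sum>k\<in>set_pmf P. pmf P k * \<bar>F k x\<bar>)" for x
    by (subst integral_measure_pmf[OF fin]) auto
  show int: "integrable (A \<Otimes>\<^sub>M measure_pmf P) (\<lambda>x. F (snd x) (fst x))"
  proof (rule Fubini_integrable[OF meas])
    show "integrable A (\<lambda>x. \<integral>y. norm (F (snd (x, y)) (fst (x, y))) \<partial>measure_pmf P)"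
      unfolding inner by (auto intro!: integrable_sum integrable_mult_right integrable_abs F)
    show "AE x in A. integrable (measure_pmf P) (\<lambda>y. F (snd (x, y)) (fst (x, y)))"
      using fin by (auto intro: integrable_measure_pmf_finite)
  qed
  have "integral\<^sup>L (A \<Otimes>\<^sub>M measure_pmf P) (case_prod (\<lambda>x y. F y x))
        = (\<integral>y. (\<integral>x. F y x \<partial>A) \<partial>measure_pmf P)"
    by (rule integral_snd[symmetric]) (use int in \<open>simp add: split_beta'\<close>)
  also have "\<dots> = (\<Sum>k\<in>set_pmf P. pmf P k * integral\<^sup>L A (F k))"
    by (subst integral_measure_pmf[OF fin]) auto
  finally show "integral\<^sup>L (A \<Otimes>\<^sub>M measure_pmf P) (\<lambda>x. F (snd x) (fst x))
          = (\<Sum>k\<in>set_pmf P. pmf P k * integral\<^sup>L A (F k))"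
    by (simp add: split_beta')
qed

lemma integral_triple_measure_pmf_fst:
  fixes F :: "nat \<Rightarrow> 'a \<Rightarrow> real"
  assumes A: "prob_space A" and B: "prob_space B" and fin: "finite (set_pmf P)"
    and F: "\<And>k. integrable A (F k)"
  shows "integrable (A \<Otimes>\<^sub>M (B \<Otimes>\<^sub>M measure_pmf P)) (\<lambda>x. F (snd (snd x)) (fst x))"
    and "integral\<^sup>L (A \<Otimes>\<^sub>M (B \<Otimes>\<^sub>M measure_pmf P)) (\<lambda>x. F (snd (snd x)) (fst x))
          = (\<Sum>k\<in>set_pmf P. pmf P k * integral\<^sup>L A (F k))"
proof -
  let ?N = "B \<Otimes>\<^sub>M measure_pmf P"
  interpret A: prob_space A by fact
  interpret B: prob_space B by fact
  interpret N: prob_space ?N by (intro prob_space_pair B measure_pmf.prob_space_axioms)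
  interpret pair_sigma_finite A ?N
    by (intro pair_sigma_finite.intro A.sigma_finite_measure_axioms N.sigma_finite_measure_axioms)
  have "(\<lambda>x. snd (snd x)) \<in> measurable (A \<Otimes>\<^sub>M ?N) (measure_pmf P)" by measurable
  then have snd_meas: "(\<lambda>x. snd (snd x)) \<in> measurable (A \<Otimes>\<^sub>M ?N) (count_space UNIV)"
    by (simp add: measurable_cong_sets)
  have meas: "(\<lambda>x. F (snd (snd x)) (fst x)) \<in> borel_measurable (A \<Otimes>\<^sub>M ?N)"
    by (rule measurable_compose_countable'[where I=UNIV and f="\<lambda>k x. F k (fst x)"])
       (use borel_measurable_integrable[OF F] snd_meas in auto)
  have inner_int: "integrable ?N (\<lambda>y. H (snd y) (fst y))"
    and inner: "integral\<^sup>L ?N (\<lambda>y. H (snd y) (fst y)) = (\<Sum>k\<in>set_pmf P. pmf P k * integral\<^sup>L B (H k))"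
    if "\<And>k. integrable B (H k)" for H :: "nat \<Rightarrow> 'b \<Rightarrow> real"
    using integral_pair_measure_pmf[of B P H, OF B fin that] by auto
  have norm_inner: "(\<integral>y. norm (F (snd (snd (x, y))) (fst (x, y))) \<partial>?N)
      = (\<Sum>k\<in>set_pmf P. pmf P k * \<bar>F k x\<bar>)" for x
    using inner[of "\<lambda>k _. \<bar>F k x\<bar>"] by (simp add: B.prob_space)
  show int: "integrable (A \<Otimes>\<^sub>M ?N) (\<lambda>x. F (snd (snd x)) (fst x))"
  proof (rule Fubini_integrable[OF meas])
    show "integrable A (\<lambda>x. \<integral>y. norm (F (snd (snd (x, y))) (fst (x, y))) \<partial>?N)"
      unfolding norm_inner by (auto intro!: integrable_sum integrable_mult_right integrable_abs F)
    show "AE x in A. integrable ?N (\<lambda>y. F (snd (snd (x, y))) (fst (x, y)))"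
      using inner_int[of "\<lambda>k _. F k _"] by simp
  qed
  have "integral\<^sup>L (A \<Otimes>\<^sub>M ?N) (case_prod (\<lambda>x y. F (snd y) x)) = (\<integral>x. (\<integral>y. F (snd y) x \<partial>?N) \<partial>A)"
    by (rule integral_fst[symmetric]) (use int in \<open>simp add: split_beta'\<close>)
  also have "\<dots> = (\<integral>x. (\<Sum>k\<in>set_pmf P. pmf P k * F k x) \<partial>A)"
    using inner[of "\<lambda>k _. F k _"] by (simp add: B.prob_space)
  also have "\<dots> = (\<Sum>k\<in>set_pmf P. pmf P k * integral\<^sup>L A (F k))"
    using F by (simp add: integral_sum integral_mult_right)
  finally show "integral\<^sup>L (A \<Otimes>\<^sub>M ?N) (\<lambda>x. F (snd (snd x)) (fst x))
          = (\<Sum>k\<in>set_pmf P. pmf P k * integral\<^sup>L A (F k))"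
    by (simp add: split_beta')
qed

lemma integral_triple_measure_pmf_snd:
  fixes G :: "nat \<Rightarrow> 'b \<Rightarrow> real"
  assumes A: "prob_space A" and B: "prob_space B" and fin: "finite (set_pmf P)"
    and G: "\<And>k. integrable B (G k)"
  shows "integrable (A \<Otimes>\<^sub>M (B \<Otimes>\<^sub>M measure_pmf P)) (\<lambda>x. G (snd (snd x)) (fst (snd x)))"
    and "integral\<^sup>L (A \<Otimes>\<^sub>M (B \<Otimes>\<^sub>M measure_pmf P)) (\<lambda>x. G (snd (snd x)) (fst (snd x)))
          = (\<Sum>k\<in>set_pmf P. pmf P k * integral\<^sup>L B (G k))"
proof -
  have N: "prob_space (B \<Otimes>\<^sub>M measure_pmf P)"
    by (intro prob_space_pair B measure_pmf.prob_space_axioms)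
  note I = integral_pair_measure_pmf[OF B fin G]
  show "integrable (A \<Otimes>\<^sub>M (B \<Otimes>\<^sub>M measure_pmf P)) (\<lambda>x. G (snd (snd x)) (fst (snd x)))"
    using integral_comp_snd_pair_prob(1)[OF A N I(1)] .
  show "integral\<^sup>L (A \<Otimes>\<^sub>M (B \<Otimes>\<^sub>M measure_pmf P)) (\<lambda>x. G (snd (snd x)) (fst (snd x)))
          = (\<Sum>k\<in>set_pmf P. pmf P k * integral\<^sup>L B (G k))"
    using integral_comp_snd_pair_prob(2)[OF A N I(1)] I(2) by simp
qed

lemma expectation_recursion:
  fixes M :: "'a measure" and X Z :: "nat \<Rightarrow> nat \<Rightarrow> 'a \<Rightarrow> real"
  assumes prob: "prob_space M"
    and X: "\<And>i n. i < 2 \<Longrightarrow> integrable M (X i n)"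
    and Z: "\<And>i n. i < 2 \<Longrightarrow> integrable M (Z i n)"
    and q: "0 \<le> q" "q \<le> 1" and i: "i < 2"
    and rec: "distr M borel (\<lambda>\<omega>. (X i n \<omega>, Z i n \<omega>)) =
       distr (M \<Otimes>\<^sub>M (M \<Otimes>\<^sub>M measure_pmf (binomial_pmf n q))) borel
         (\<lambda>(\<omega>1, \<omega>2, k). (X 0 k \<omega>1 + X 1 (n - k) \<omega>2 + c1, Z 0 k \<omega>1 + Z 1 (n - k) \<omega>2 + c2))"
  shows "integral\<^sup>L M (Z i n)
    = binom_avg q n (\<lambda>k. integral\<^sup>L M (Z 0 k) + integral\<^sup>L M (Z 1 (n - k))) + c2"
proof -
  interpret M: prob_space M by fact
  let ?P = "binomial_pmf n q"
  let ?T = "M \<Otimes>\<^sub>M (M \<Otimes>\<^sub>M measure_pmf ?P)"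
  interpret T: prob_space ?T by (intro prob_space_pair prob measure_pmf.prob_space_axioms)
  have fin: "finite (set_pmf ?P)" using set_pmf_binomial_subset[OF q] finite_subset by blast
  note X0 = integral_triple_measure_pmf_fst[OF prob prob fin, of "X 0"]
    and X1 = integral_triple_measure_pmf_snd[OF prob prob fin, of "\<lambda>k. X 1 (n - k)"]
    and Z0 = integral_triple_measure_pmf_fst[OF prob prob fin, of "Z 0"]
    and Z1 = integral_triple_measure_pmf_snd[OF prob prob fin, of "\<lambda>k. Z 1 (n - k)"]
  have [measurable]: "(\<lambda>x. X 0 (snd (snd x)) (fst x)) \<in> borel_measurable ?T"
     "(\<lambda>x. X 1 (n - snd (snd x)) (fst (snd x))) \<in> borel_measurable ?T"
     "(\<lambda>x. Z 0 (snd (snd x)) (fst x)) \<in> borel_measurable ?T"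
     "(\<lambda>x. Z 1 (n - snd (snd x)) (fst (snd x))) \<in> borel_measurable ?T"
     "X i n \<in> borel_measurable M" "Z i n \<in> borel_measurable M"
    using X0(1) X1(1) Z0(1) Z1(1) X Z i by auto
  have pair_meas: "(\<lambda>x. (X 0 (snd (snd x)) (fst x) + X 1 (n - snd (snd x)) (fst (snd x)) + c1,
      Z 0 (snd (snd x)) (fst x) + Z 1 (n - snd (snd x)) (fst (snd x)) + c2)) \<in> borel_measurable ?T"
    by measurable
  have snd_meas: "snd \<in> borel_measurable (borel :: (real \<times> real) measure)"
    using measurable_snd[of "borel::real measure" "borel::real measure"] by (simp add: borel_prod)
  have "integral\<^sup>L M (Z i n) = integral\<^sup>L (distr M borel (\<lambda>\<omega>. (X i n \<omega>, Z i n \<omega>))) snd"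
    by (subst integral_distr[OF _ snd_meas]) auto
  also have "\<dots> = integral\<^sup>L ?T (\<lambda>x. Z 0 (snd (snd x)) (fst x) + Z 1 (n - snd (snd x)) (fst (snd x)) + c2)"
    unfolding rec split_beta' by (subst integral_distr[OF pair_meas snd_meas]) auto
  also have "\<dots> = integral\<^sup>L ?T (\<lambda>x. Z 0 (snd (snd x)) (fst x))
      + integral\<^sup>L ?T (\<lambda>x. Z 1 (n - snd (snd x)) (fst (snd x))) + c2"
    using Z0(1) Z1(1) Z by (simp add: T.prob_space)
  also have "\<dots> = binom_avg q n (\<lambda>k. integral\<^sup>L M (Z 0 k) + integral\<^sup>L M (Z 1 (n - k))) + c2"
    using Z0(2) Z1(2) Z sum_pmf_binomial_eq_binom_avg[OF q]
    by (simp add: sum.distrib distrib_left binom_avg_add)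
  finally show ?thesis .
qed

section \<open>Coupled binomial recursions\<close>

lemma binom_avg_endpoint_bound:
  fixes d0 d1 \<beta> :: "nat \<Rightarrow> real"
  assumes q: "0 \<le> q" "q \<le> 1"
    and below: "\<And>k. k < n \<Longrightarrow> \<bar>d0 k\<bar> \<le> \<beta> k \<and> \<bar>d1 k\<bar> \<le> \<beta> k"
    and top: "\<bar>d0 n\<bar> \<le> \<beta> n + D" "\<bar>d1 n\<bar> \<le> \<beta> n + D"
  shows "\<bar>binom_avg q n (\<lambda>k. q * d0 k + (1 - q) * d1 (n - k))\<bar>
    \<le> q * binom_avg q n \<beta> + (1 - q) * binom_avg (1 - q) n \<beta> + (q ^ Suc n + (1 - q) ^ Suc n) * D"
proof -
  have "\<bar>binom_avg q n (\<lambda>k. q * d0 k + (1 - q) * d1 (n - k))\<bar>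
      \<le> binom_avg q n (\<lambda>k. \<bar>q * d0 k + (1 - q) * d1 (n - k)\<bar>)"
    by (rule binom_avg_abs[OF q])
  also have "\<dots> \<le> binom_avg q n (\<lambda>k. q * (\<beta> k + (if k = n then D else 0))
                                   + (1 - q) * (\<beta> (n - k) + (if k = 0 then D else 0)))"
  proof (rule binom_avg_mono[OF q])
    fix k assume k: "k \<le> n"
    have "\<bar>d0 k\<bar> \<le> \<beta> k + (if k = n then D else 0)"
      using below[of k] top k by auto
    moreover have "\<bar>d1 (n - k)\<bar> \<le> \<beta> (n - k) + (if k = 0 then D else 0)"
      using below[of "n - k"] top k by auto
    ultimately show "\<bar>q * d0 k + (1 - q) * d1 (n - k)\<bar>
        \<le> q * (\<beta> k + (if k = n then D else 0)) + (1 - q) * (\<beta> (n - k) + (if k = 0 then D else 0))"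
      using q by (intro order_trans[OF abs_triangle_ineq] add_mono)
        (auto simp: abs_mult intro: mult_left_mono)
  qed
  also have "\<dots> = q * binom_avg q n \<beta> + (1 - q) * binom_avg (1 - q) n \<beta>
      + (q ^ Suc n + (1 - q) ^ Suc n) * D"
    unfolding distrib_left binom_avg_add binom_avg_cmult binom_avg_reflect[of q n \<beta>]
      binom_avg_indicator_top binom_avg_indicator_bot
    by (simp add: algebra_simps)
  finally show ?thesis .
qed

lemma binom_avg_harmonic_profile:
  "q * binom_avg q n (\<lambda>k. A - B / (real k + 1)) + (1 - q) * binom_avg (1 - q) n (\<lambda>k. A - B / (real k + 1))
   = A - (2 - q ^ Suc n - (1 - q) ^ Suc n) * B / (real n + 1)"
proof -
  have avg: "binom_avg s n (\<lambda>k. A - B / (real k + 1)) = A - B * binom_avg s n (\<lambda>k. 1 / (real k + 1))"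
    for s
    by (simp add: binom_avg_diff binom_avg_const binom_avg_cmult[symmetric])
  have "q * (A - B * binom_avg q n (\<lambda>k. 1 / (real k + 1)))
      + (1 - q) * (A - B * binom_avg (1 - q) n (\<lambda>k. 1 / (real k + 1)))
      = A - B * (q * binom_avg q n (\<lambda>k. 1 / (real k + 1)))
          - B * ((1 - q) * binom_avg (1 - q) n (\<lambda>k. 1 / (real k + 1)))"
    by (simp add: algebra_simps)
  also have "\<dots> = A - (2 - q ^ Suc n - (1 - q) ^ Suc n) * B / (real n + 1)"
    unfolding binom_avg_reciprocal[of q] binom_avg_reciprocal[of "1 - q"]
    by (simp add: diff_divide_distrib add_divide_distrib algebra_simps)
  finally show ?thesis unfolding avg .
qed

lemma binomial_endpoint_mass_le:
  fixes q :: real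
  assumes "0 < q" "q < 1" "1 \<le> n"
  shows "q ^ Suc n + (1 - q) ^ Suc n \<le> 1 - 2 * q * (1 - q)"
proof -
  have "q ^ Suc n \<le> q ^ 2" "(1 - q) ^ Suc n \<le> (1 - q) ^ 2"
    using assms by (intro power_decreasing; simp)+
  then show ?thesis by (simp add: power2_eq_square algebra_simps)
qed

text \<open>The comparison sequence \<open>A - B / (n + 1)\<close> is what makes the induction close: averaging
  \<open>1 / (k + 1)\<close> against both \<open>Bin(n, q)\<close> and \<open>Bin(n, 1 - q)\<close> gains a factor close to \<open>2\<close>,
  which absorbs the toll \<open>K / (n + 1)\<close>.\<close>
lemma binom_avg_maximum_principle_step:
  fixes d0 d1 :: "nat \<Rightarrow> real"
  assumes q: "0 < q" "q < 1" and n: "1 \<le> n"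
    and below: "\<And>k. k < n \<Longrightarrow> \<bar>d0 k\<bar> \<le> A - B / (real k + 1) \<and> \<bar>d1 k\<bar> \<le> A - B / (real k + 1)"
    and top: "\<bar>d0 n\<bar> \<le> E" "\<bar>d1 n\<bar> \<le> E"
    and E: "E \<le> \<bar>binom_avg q n (\<lambda>k. q * d0 k + (1 - q) * d1 (n - k))\<bar> + K / (real n + 1)"
    and K: "K \<le> 2 * q * (1 - q) * B" and B: "0 \<le> B"
  shows "E \<le> A - B / (real n + 1)"
proof -
  define \<beta> where "\<beta> k = A - B / (real k + 1)" for k
  define w where "w = q ^ Suc n + (1 - q) ^ Suc n"
  define \<psi> where "\<psi> = 1 / (real n + 1)"
  have "\<bar>binom_avg q n (\<lambda>k. q * d0 k + (1 - q) * d1 (n - k))\<bar>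
      \<le> q * binom_avg q n \<beta> + (1 - q) * binom_avg (1 - q) n \<beta> + w * (E - \<beta> n)"
    unfolding w_def by (rule binom_avg_endpoint_bound) (use q below top in \<open>auto simp: \<beta>_def\<close>)
  also have "q * binom_avg q n \<beta> + (1 - q) * binom_avg (1 - q) n \<beta> = A - (2 - w) * (B * \<psi>)"
    unfolding \<beta>_def w_def \<psi>_def by (simp add: binom_avg_harmonic_profile)
  finally have "E \<le> A - (2 - w) * (B * \<psi>) + w * (E - \<beta> n) + K * \<psi>"
    using E by (simp add: \<psi>_def)
  moreover have \<beta>n: "\<beta> n = A - B * \<psi>" by (simp add: \<beta>_def \<psi>_def)
  ultimately have "(1 - w) * (E - \<beta> n) \<le> K * \<psi> - (1 - w) * B * \<psi>"
    by (simp add: \<beta>n algebra_simps)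
  moreover have gap: "2 * q * (1 - q) \<le> 1 - w"
    using binomial_endpoint_mass_le[OF q n] by (simp add: w_def)
  have "K \<le> (1 - w) * B" using K mult_right_mono[OF gap B] by linarith
  then have "K * \<psi> \<le> (1 - w) * B * \<psi>" by (rule mult_right_mono) (simp add: \<psi>_def)
  ultimately have "(1 - w) * (E - \<beta> n) \<le> 0" by linarith
  moreover have "0 < 1 - w" using gap q by (smt (verit) mult_pos_pos)
  ultimately show ?thesis by (simp add: mult_le_0_iff \<beta>_def)
qed

lemma binomial_recursion_bounded_increments:
  fixes a t :: "nat \<Rightarrow> nat \<Rightarrow> real" and q :: "nat \<Rightarrow> real"
  assumes q: "\<And>i. i < 2 \<Longrightarrow> 0 < q i \<and> q i < 1"
    and rec: "\<And>i n. i < 2 \<Longrightarrow> 2 \<le> n \<Longrightarrow>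
      a i n = binom_avg (q i) n (\<lambda>k. a 0 k + a 1 (n - k)) + t i n"
    and K: "0 \<le> K"
    and toll: "\<And>i n. i < 2 \<Longrightarrow> 2 \<le> n \<Longrightarrow> \<bar>t i (Suc n) - t i n\<bar> \<le> K / (real n + 1)"
  shows "\<exists>A. \<forall>i<2. \<forall>n. \<bar>a i (Suc n) - a i n\<bar> \<le> A"
proof -
  define d where "d i n = a i (Suc n) - a i n" for i n
  have d_rec: "d i n = binom_avg (q i) n (\<lambda>k. q i * d 0 k + (1 - q i) * d 1 (n - k))
      + (t i (Suc n) - t i n)" if "i < 2" "2 \<le> n" for i n
    using rec[of i n] rec[of i "Suc n"] binom_avg_convolution_Suc[of "q i" n "a 0" "a 1"] that
    unfolding d_def by simp
  define \<delta> where "\<delta> = min (2 * q 0 * (1 - q 0)) (2 * q 1 * (1 - q 1))"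
  have \<delta>: "0 < \<delta>" using q[of 0] q[of 1] by (simp add: \<delta>_def)
  define B where "B = K / \<delta>"
  have B: "0 \<le> B" using K \<delta> by (simp add: B_def)
  have KB: "K \<le> 2 * q i * (1 - q i) * B" if "i < 2" for i
  proof -
    have "\<delta> \<le> 2 * q i * (1 - q i)" using that by (auto simp: \<delta>_def less_2_cases_iff)
    then have "\<delta> * B \<le> 2 * q i * (1 - q i) * B" using B by (rule mult_right_mono)
    then show ?thesis using \<delta> by (simp add: B_def)
  qed
  define A where "A = B + \<bar>d 0 0\<bar> + \<bar>d 1 0\<bar> + \<bar>d 0 1\<bar> + \<bar>d 1 1\<bar>"
  have bound: "\<forall>j<2. \<bar>d j n\<bar> \<le> A - B / (real n + 1)" for n
  proof (induction n rule: less_induct)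
    case (less n)
    show ?case
    proof (cases "n < 2")
      case True
      have "B / (real n + 1) \<le> B" using B by (simp add: divide_le_eq mult_le_cancel_left1)
      then show ?thesis using True unfolding A_def by (auto simp: less_2_cases_iff)
    next
      case False
      then have n: "2 \<le> n" by simp
      define E where "E = max \<bar>d 0 n\<bar> \<bar>d 1 n\<bar>"
      have "\<bar>d 0 n\<bar> = E \<or> \<bar>d 1 n\<bar> = E" by (simp add: E_def max_def)
      then obtain j where j: "j < 2" "\<bar>d j n\<bar> = E" by (metis one_less_numeral_iff pos2 semiring_norm(76))
      have "E \<le> A - B / (real n + 1)"
      proof (rule binom_avg_maximum_principle_step[OF _ _ _ _ _ _ _ KB[OF j(1)] B])
        show "E \<le> \<bar>binom_avg (q j) n (\<lambda>k. q j * d 0 k + (1 - q j) * d 1 (n - k))\<bar> + K / (real n + 1)"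
          using j d_rec[OF j(1) n] toll[OF j(1) n] by linarith
      qed (use q[OF j(1)] n less.IH in \<open>auto simp: E_def\<close>)
      then show ?thesis unfolding E_def by (auto simp: less_2_cases_iff)
    qed
  qed
  have "\<bar>a i (Suc n) - a i n\<bar> \<le> A" if "i < 2" for i n
  proof -
    have "0 \<le> B / (real n + 1)" using B by simp
    then show ?thesis using bound[of n, rule_format, OF that] unfolding d_def by linarith
  qed
  then show ?thesis by blast
qed

lemma abs_diff_le_of_bounded_increments:
  fixes f :: "nat \<Rightarrow> real"
  assumes "\<And>n. \<bar>f (Suc n) - f n\<bar> \<le> A"
  shows "\<bar>f n - f m\<bar> \<le> A * \<bar>real n - real m\<bar>"
proof -
  have up: "\<bar>f (m + k) - f m\<bar> \<le> A * real k" for m k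
  proof (induction k)
    case (Suc k)
    have "\<bar>f (m + Suc k) - f m\<bar> \<le> \<bar>f (Suc (m + k)) - f (m + k)\<bar> + \<bar>f (m + k) - f m\<bar>" by simp
    also have "\<dots> \<le> A + A * real k" using assms[of "m + k"] Suc by simp
    finally show ?case by (simp add: algebra_simps)
  qed simp
  show ?thesis
  proof (cases "m \<le> n")
    case True
    then obtain k where "n = m + k" using le_Suc_ex by blast
    then show ?thesis using up[of m k] by simp
  next
    case False
    then obtain k where "m = n + k" by (metis le_Suc_ex nat_le_linear)
    then show ?thesis using up[of n k] by (simp add: abs_minus_commute)
  qed
qed

section \<open>The toll increments\<close>

lemma xlogx_Suc_diff_bounds:
  "0 \<le> ln (real k + 1) + 1 - (xlogx (real (Suc k)) - xlogx (real k))"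
  "ln (real k + 1) + 1 - (xlogx (real (Suc k)) - xlogx (real k)) \<le> 1 / (real k + 1)"
proof -
  define x where "x = real k"
  have "x / (x + 1) \<le> x * (ln (x + 1) - ln x) \<and> x * (ln (x + 1) - ln x) \<le> 1"
  proof (cases "k = 0")
    case False
    have x: "0 < x" using False by (simp add: x_def)
    have "ln ((x + 1) / x) \<le> (x + 1) / x - 1" "ln (x / (x + 1)) \<le> x / (x + 1) - 1"
      using x by (intro ln_le_minus_one; simp)+
    then have "1 / (x + 1) \<le> ln (x + 1) - ln x" "ln (x + 1) - ln x \<le> 1 / x"
      using x by (simp_all add: ln_div field_simps)
    then show ?thesis
      using x mult_left_mono[of "1 / (x + 1)" _ x] mult_left_mono[of _ "1 / x" x] by simp
  qed (simp add: x_def)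
  moreover have "1 - x / (x + 1) = 1 / (x + 1)" by (simp add: x_def field_simps)
  ultimately show "0 \<le> ln (real k + 1) + 1 - (xlogx (real (Suc k)) - xlogx (real k))"
    "ln (real k + 1) + 1 - (xlogx (real (Suc k)) - xlogx (real k)) \<le> 1 / (real k + 1)"
    by (simp_all add: xlogx_def x_def algebra_simps)
qed

text \<open>Both bounds come from \<open>ln y \<le> y - 1\<close> at \<open>y = m / (k + 1)\<close> and \<open>y = (k + 1) / m\<close>; the
  resulting means of \<open>1 / (k + 1)\<close> and of \<open>k\<close> are explicit.\<close>
lemma binom_avg_ln_Suc_bounds:
  fixes n :: nat
  assumes q: "0 < q" "q < 1"
  defines "m \<equiv> (real n + 1) * q"
  shows "ln m \<le> binom_avg q n (\<lambda>k. ln (real k + 1))"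
    and "binom_avg q n (\<lambda>k. ln (real k + 1)) \<le> ln m + (1 - q) / m"
proof -
  have m: "0 < m" using q by (simp add: m_def)
  have "binom_avg q n (\<lambda>k. ln m + 1 - m * (1 / (real k + 1))) \<le> binom_avg q n (\<lambda>k. ln (real k + 1))"
  proof (rule binom_avg_mono)
    fix k
    have "ln (m / (real k + 1)) \<le> m / (real k + 1) - 1" using m by (intro ln_le_minus_one) simp
    then show "ln m + 1 - m * (1 / (real k + 1)) \<le> ln (real k + 1)"
      using m by (simp add: ln_div)
  qed (use q in auto)
  moreover have "m * binom_avg q n (\<lambda>k. 1 / (real k + 1)) = 1 - (1 - q) ^ Suc n"
    using binom_avg_reciprocal[of q n] unfolding m_def by (simp add: field_simps)
  moreover have "0 \<le> (1 - q) ^ Suc n" using q by simp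
  ultimately show "ln m \<le> binom_avg q n (\<lambda>k. ln (real k + 1))"
    by (simp add: binom_avg_diff binom_avg_const binom_avg_cmult[symmetric])
  have "binom_avg q n (\<lambda>k. ln (real k + 1)) \<le> binom_avg q n (\<lambda>k. (ln m - 1 + 1 / m) + (1 / m) * real k)"
  proof (rule binom_avg_mono)
    fix k
    have "ln ((real k + 1) / m) \<le> (real k + 1) / m - 1" using m by (intro ln_le_minus_one) simp
    then have "ln (real k + 1) - ln m \<le> (real k + 1) / m - 1" using m by (simp add: ln_div)
    moreover have "(real k + 1) / m = (1 / m) * real k + 1 / m" by (simp add: add_divide_distrib)
    ultimately show "ln (real k + 1) \<le> (ln m - 1 + 1 / m) + (1 / m) * real k" by linarith
  qed (use q in auto)
  also have "\<dots> = ln m - 1 + 1 / m + (1 / m) * (real n * q)"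
    by (simp only: binom_avg_add binom_avg_const binom_avg_cmult binom_avg_real)
  also have "\<dots> = ln m + (real n * q + 1 - m) / m"
    using m by (simp add: field_simps)
  also have "real n * q + 1 - m = 1 - q"
    by (simp add: m_def algebra_simps)
  finally show "binom_avg q n (\<lambda>k. ln (real k + 1)) \<le> ln m + (1 - q) / m" .
qed

lemma binom_avg_ln_Suc_bounds_scaled:
  assumes q: "0 < q" "q < 1"
  shows "q * (ln (real n + 1) + ln q) \<le> q * binom_avg q n (\<lambda>k. ln (real k + 1))"
    and "q * binom_avg q n (\<lambda>k. ln (real k + 1)) \<le> q * (ln (real n + 1) + ln q) + (1 - q) / (real n + 1)"
proof -
  have "ln ((real n + 1) * q) = ln (real n + 1) + ln q" using q by (simp add: ln_mult)
  then have "ln (real n + 1) + ln q \<le> binom_avg q n (\<lambda>k. ln (real k + 1))"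
    "binom_avg q n (\<lambda>k. ln (real k + 1)) \<le> ln (real n + 1) + ln q + (1 - q) / ((real n + 1) * q)"
    using binom_avg_ln_Suc_bounds[OF q, of n] by simp_all
  then have "q * (ln (real n + 1) + ln q) \<le> q * binom_avg q n (\<lambda>k. ln (real k + 1))"
    "q * binom_avg q n (\<lambda>k. ln (real k + 1)) \<le> q * (ln (real n + 1) + ln q + (1 - q) / ((real n + 1) * q))"
    using q by (simp_all add: mult_left_mono)
  moreover have "q * (ln (real n + 1) + ln q + (1 - q) / ((real n + 1) * q))
      = q * (ln (real n + 1) + ln q) + (1 - q) / (real n + 1)"
    using q by (simp add: distrib_left)
  ultimately show "q * (ln (real n + 1) + ln q) \<le> q * binom_avg q n (\<lambda>k. ln (real k + 1))"
    "q * binom_avg q n (\<lambda>k. ln (real k + 1)) \<le> q * (ln (real n + 1) + ln q) + (1 - q) / (real n + 1)"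
    by simp_all
qed

lemma binom_avg_le_reciprocal:
  assumes q: "0 \<le> q" "q \<le> 1" and e: "\<And>k. 0 \<le> e k \<and> e k \<le> 1 / (real k + 1)"
  shows "0 \<le> q * binom_avg q n e" "q * binom_avg q n e \<le> 1 / (real n + 1)"
proof -
  show "0 \<le> q * binom_avg q n e"
    using binom_avg_mono[of q n "\<lambda>_. 0" e] q e by (simp add: binom_avg_const)
  have "q * binom_avg q n e \<le> q * binom_avg q n (\<lambda>k. 1 / (real k + 1))"
    using q e by (intro mult_left_mono binom_avg_mono) auto
  also have "\<dots> \<le> 1 / (real n + 1)"
    using q by (simp add: binom_avg_reciprocal divide_right_mono)
  finally show "q * binom_avg q n e \<le> 1 / (real n + 1)" .
qed

definition split_entropy :: "real \<Rightarrow> nat \<Rightarrow> real" where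
  "split_entropy q n = xlogx (real n) - binom_avg q n (\<lambda>k. xlogx (real k) + xlogx (real (n - k)))"

lemma split_entropy_increment:
  assumes q: "0 < q" "q < 1"
  shows "\<bar>split_entropy q (Suc n) - split_entropy q n + (xlogx q + xlogx (1 - q))\<bar> \<le> 2 / (real n + 1)"
proof -
  define r where "r = 1 - q"
  have r: "0 < r" "r < 1" using q by (auto simp: r_def)
  define L where "L k = ln (real k + 1)" for k
  define e where "e k = L k + 1 - (xlogx (real (Suc k)) - xlogx (real k))" for k
  have e: "0 \<le> e k \<and> e k \<le> 1 / (real k + 1)" for k
    using xlogx_Suc_diff_bounds[of k] unfolding e_def L_def by auto
  have "split_entropy q (Suc n) - split_entropy q n
      = (L n + 1 - e n) - binom_avg q n (\<lambda>k. q * (L k + 1 - e k) + r * (L (n - k) + 1 - e (n - k)))"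
    using binom_avg_convolution_Suc[of q n "\<lambda>k. xlogx (real k)" "\<lambda>k. xlogx (real k)"]
    unfolding split_entropy_def e_def r_def by simp
  also have "\<dots> = (L n + 1 - e n) - q * (binom_avg q n L + 1 - binom_avg q n e)
      - r * (binom_avg r n L + 1 - binom_avg r n e)"
    by (simp add: binom_avg_add binom_avg_diff binom_avg_cmult binom_avg_const r_def
        binom_avg_reflect[of q n L] binom_avg_reflect[of q n e] algebra_simps)
  finally have incr: "split_entropy q (Suc n) - split_entropy q n
      = (L n + 1 - e n) - q * (binom_avg q n L + 1 - binom_avg q n e)
        - r * (binom_avg r n L + 1 - binom_avg r n e)" .
  have rq: "1 - r = q" by (simp add: r_def)
  have Ln: "ln (real n + 1) = L n" by (simp add: L_def)
  note binom_avg_ln_Suc_bounds_scaled[OF q, of n, folded L_def, unfolded Ln]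
    binom_avg_ln_Suc_bounds_scaled[OF r, of n, folded L_def, unfolded Ln rq]
  moreover have "0 \<le> q * binom_avg q n e" "q * binom_avg q n e \<le> 1 / (real n + 1)"
    "0 \<le> r * binom_avg r n e" "r * binom_avg r n e \<le> 1 / (real n + 1)"
    using binom_avg_le_reciprocal[OF _ _ e] q r by auto
  moreover have "q / (real n + 1) + r / (real n + 1) = 1 / (real n + 1)"
    by (simp add: r_def add_divide_distrib[symmetric])
  moreover have "xlogx q + xlogx (1 - q) = q * ln q + r * ln r" by (simp add: xlogx_def r_def)
  ultimately show ?thesis
    unfolding incr using e[of n] by (simp add: r_def algebra_simps) linarith
qed

lemma power_mult_Suc_increment_bound:
  fixes r :: real
  assumes "0 < r" "r < 1"
  shows "\<exists>G\<ge>0. \<forall>m. \<bar>r ^ Suc m * (real m + 2) - r ^ m * (real m + 1)\<bar> \<le> G / (real m + 2)"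
proof -
  define g where "g m = r ^ Suc m * (real m + 2) - r ^ m * (real m + 1)" for m
  have "(\<lambda>m. (real m + 2) * g m) \<longlonglongrightarrow> 0" unfolding g_def using assms by real_asymp
  then have "Bseq (\<lambda>m. (real m + 2) * g m)" by (intro convergent_imp_Bseq convergentI)
  then obtain G where G: "G > 0" "\<And>m. (real m + 2) * \<bar>g m\<bar> \<le> G"
    by (auto simp: Bseq_def abs_mult)
  have "\<bar>g m\<bar> \<le> G / (real m + 2)" for m
    using G(2)[of m] by (simp add: pos_le_divide_eq mult.commute)
  then show ?thesis using G(1) unfolding g_def by (intro exI[of _ G]) auto
qed

lemma Hent_pos:
  assumes "0 < p j 0" "p j 0 < 1" "0 < p j 1" "p j 1 < 1"
  shows "0 < Hent p j"
proof -
  have "xlogx (p j 0) < 0" "xlogx (p j 1) < 0"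
    using assms by (simp_all add: xlogx_def mult_pos_neg)
  then show ?thesis by (simp add: Hent_def numeral_2_eq_2)
qed

lemma Htot_pos:
  assumes "\<And>i j. i < 2 \<Longrightarrow> j < 2 \<Longrightarrow> 0 < p i j \<and> p i j < 1"
  shows "0 < Htot p"
  using Hent_pos[of p 0] Hent_pos[of p 1] assms[of 0 0] assms[of 0 1] assms[of 1 0] assms[of 1 1]
  by (simp add: Htot_def statpi_def add_pos_pos)

lemma Htot_eq_drift:
  assumes "p 0 1 + p 1 0 \<noteq> 0" "i < 2"
  shows "Hent p i + statpi p (1 - i) * (Hent p (1 - i) - Hent p i) = Htot p"
proof -
  have "statpi p 0 + statpi p 1 = 1"
    using assms(1) by (simp add: statpi_def add_divide_distrib[symmetric] add.commute)
  then have "Hent p i + statpi p (1 - i) * (Hent p (1 - i) - Hent p i)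
      = Hent p i * (statpi p 0 + statpi p 1) + statpi p (1 - i) * (Hent p (1 - i) - Hent p i)"
    by simp
  also have "\<dots> = Htot p"
    using assms(2) by (cases i) (simp_all add: Htot_def algebra_simps)
  finally show ?thesis .
qed

lemma eta2_Suc_diff:
  fixes p :: "nat \<Rightarrow> nat \<Rightarrow> real"
  assumes pos: "\<And>i j. i < 2 \<Longrightarrow> j < 2 \<Longrightarrow> 0 < p i j \<and> p i j < 1" and i: "i < 2"
  shows "eta2 p i (Suc n) - eta2 p i n
    = (Hent p i - (split_entropy (p i 0) (Suc n) - split_entropy (p i 0) n)) / Htot p
      - (Hent p 1 - Hent p 0) / ((p 0 1 + p 1 0) * Htot p) * p i 0
        * (p i 1 ^ n * (real n + 1) - p i 1 ^ (n - 1) * real n)"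
proof -
  define H where "H = Htot p"
  have H: "0 < H" unfolding H_def by (rule Htot_pos) (use pos in blast)
  define c where "c = statpi p (1 - i) * (Hent p (1 - i) - Hent p i) / H"
  have drift: "Hent p i / H + c = 1"
    using Htot_eq_drift[OF _ i, of p] pos[of 0 1] pos[of 1 0] H
    by (simp add: c_def H_def add_divide_distrib[symmetric])
  define \<Gamma> where "\<Gamma> = (Hent p 1 - Hent p 0) / ((p 0 1 + p 1 0) * H) * p i 0"
  define dF where "dF = split_entropy (p i 0) (Suc n) - split_entropy (p i 0) n"
  define dG where "dG = p i 1 ^ n * (real n + 1) - p i 1 ^ (n - 1) * real n"
  have eta1: "eta1 p i m = split_entropy (p i 0) m / H + c * real m + \<Gamma> * (p i 1 ^ (m - 1) * real m)" for m
    using expectation_binomial_eq_binom_avg[of "p i 0" m] pos[OF i, of 0]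
    by (simp add: eta1_def split_entropy_def H_def c_def \<Gamma>_def)
  have "eta2 p i (Suc n) - eta2 p i n = 1 - (dF / H + c + \<Gamma> * dG)"
    unfolding eta2_def eta1 dF_def dG_def by (simp add: diff_divide_distrib algebra_simps)
  also have "\<dots> = (Hent p i - dF) / H - \<Gamma> * dG"
    using drift by (simp add: diff_divide_distrib algebra_simps)
  finally show ?thesis by (simp add: dF_def dG_def \<Gamma>_def H_def)
qed

lemma eta2_increment_bound:
  fixes p :: "nat \<Rightarrow> nat \<Rightarrow> real"
  assumes stoch: "\<And>i. i < 2 \<Longrightarrow> p i 0 + p i 1 = 1"
    and pos: "\<And>i j. i < 2 \<Longrightarrow> j < 2 \<Longrightarrow> 0 < p i j \<and> p i j < 1"
    and i: "i < 2"
  shows "\<exists>K\<ge>0. \<forall>n\<ge>1. \<bar>eta2 p i (Suc n) - eta2 p i n\<bar> \<le> K / (real n + 1)"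
proof -
  define q where "q = p i 0"
  define r where "r = p i 1"
  have q: "0 < q" "q < 1" and r: "0 < r" "r < 1" and rq: "r = 1 - q"
    using pos[OF i, of 0] pos[OF i, of 1] stoch[OF i] by (auto simp: q_def r_def)
  define H where "H = Htot p"
  have H: "0 < H" unfolding H_def by (rule Htot_pos) (use pos in blast)
  define \<Gamma> where "\<Gamma> = (Hent p 1 - Hent p 0) / ((p 0 1 + p 1 0) * H) * q"
  have Hent: "Hent p i = - (xlogx q + xlogx (1 - q))"
    using rq unfolding r_def by (simp add: Hent_def numeral_2_eq_2 q_def)
  obtain G where G: "G \<ge> 0" "\<And>m. \<bar>r ^ Suc m * (real m + 2) - r ^ m * (real m + 1)\<bar> \<le> G / (real m + 2)"
    using power_mult_Suc_increment_bound[OF r] by blast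
  have "\<bar>eta2 p i (Suc n) - eta2 p i n\<bar> \<le> (2 / H + \<bar>\<Gamma>\<bar> * G) / (real n + 1)" if n: "1 \<le> n" for n
  proof -
    define dF where "dF = split_entropy q (Suc n) - split_entropy q n"
    define dG where "dG = r ^ n * (real n + 1) - r ^ (n - 1) * real n"
    have dF: "\<bar>Hent p i - dF\<bar> \<le> 2 / (real n + 1)"
      using split_entropy_increment[OF q, of n] unfolding dF_def Hent by (simp add: abs_minus_commute)
    have "\<bar>(Hent p i - dF) / H\<bar> \<le> (2 / (real n + 1)) / H"
      using divide_right_mono[OF dF, of H] H by (simp add: abs_div)
    moreover have "(2 / (real n + 1)) / H = (2 / H) / (real n + 1)" by simp
    moreover have "\<bar>\<Gamma> * dG\<bar> \<le> (\<bar>\<Gamma>\<bar> * G) / (real n + 1)"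
    proof -
      obtain m where m: "n = Suc m" using n by (cases n) auto
      have "\<bar>dG\<bar> \<le> G / (real n + 1)" using G(2)[of m] by (simp add: dG_def m add.commute)
      then have "\<bar>\<Gamma>\<bar> * \<bar>dG\<bar> \<le> \<bar>\<Gamma>\<bar> * (G / (real n + 1))" by (rule mult_left_mono) simp
      then show ?thesis by (simp add: abs_mult)
    qed
    moreover have "eta2 p i (Suc n) - eta2 p i n = (Hent p i - dF) / H - \<Gamma> * dG"
      using eta2_Suc_diff[OF pos i, where n=n] by (simp add: dF_def dG_def \<Gamma>_def H_def q_def r_def)
    ultimately show ?thesis unfolding add_divide_distrib by linarith
  qed
  moreover have "0 \<le> 2 / H + \<bar>\<Gamma>\<bar> * G" using H G(1) by simp
  ultimately show ?thesis by blast
qed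

lemma eta2_increment_bound_uniform:
  fixes p :: "nat \<Rightarrow> nat \<Rightarrow> real"
  assumes stoch: "\<And>i. i < 2 \<Longrightarrow> p i 0 + p i 1 = 1"
    and pos: "\<And>i j. i < 2 \<Longrightarrow> j < 2 \<Longrightarrow> 0 < p i j \<and> p i j < 1"
  shows "\<exists>K\<ge>0. \<forall>i<2. \<forall>n\<ge>1. \<bar>eta2 p i (Suc n) - eta2 p i n\<bar> \<le> K / (real n + 1)"
proof -
  obtain K0 K1 where K0: "K0 \<ge> 0" "\<forall>n\<ge>1. \<bar>eta2 p 0 (Suc n) - eta2 p 0 n\<bar> \<le> K0 / (real n + 1)"
    and K1: "K1 \<ge> 0" "\<forall>n\<ge>1. \<bar>eta2 p 1 (Suc n) - eta2 p 1 n\<bar> \<le> K1 / (real n + 1)"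
    using eta2_increment_bound[of p 0, OF stoch pos] eta2_increment_bound[of p 1, OF stoch pos] by auto
  have "K0 / (real n + 1) \<le> (K0 + K1) / (real n + 1)" "K1 / (real n + 1) \<le> (K0 + K1) / (real n + 1)" for n
    using K0(1) K1(1) by (auto intro: divide_right_mono)
  then have "\<forall>i<2. \<forall>n\<ge>1. \<bar>eta2 p i (Suc n) - eta2 p i n\<bar> \<le> (K0 + K1) / (real n + 1)"
    using K0(2) K1(2) by (auto simp: less_2_cases_iff intro: order_trans)
  then show ?thesis using K0(1) K1(1) by (intro exI[of _ "K0 + K1"]) auto
qed

theorem lemma6p6:
  fixes p :: "nat \<Rightarrow> nat \<Rightarrow> real"
    and M :: "'a measure"
    and X Z :: "nat \<Rightarrow> nat \<Rightarrow> 'a \<Rightarrow> real"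
  assumes stoch: "\<And>i. i < 2 \<Longrightarrow> p i 0 + p i 1 = 1"
    and pos: "\<And>i j. i < 2 \<Longrightarrow> j < 2 \<Longrightarrow> 0 < p i j \<and> p i j < 1"
    and nonhalf: "\<exists>i<2. \<exists>j<2. p i j \<noteq> 1 / 2"
    and prob: "prob_space M"
    and measX: "\<And>i n. i < 2 \<Longrightarrow> X i n \<in> borel_measurable M"
    and measZ: "\<And>i n. i < 2 \<Longrightarrow> Z i n \<in> borel_measurable M"
    and sqX: "\<And>i n. i < 2 \<Longrightarrow> integrable M (\<lambda>\<omega>. (X i n \<omega>)\<^sup>2)"
    and sqZ: "\<And>i n. i < 2 \<Longrightarrow> integrable M (\<lambda>\<omega>. (Z i n \<omega>)\<^sup>2)"
    and init: "\<And>i n \<omega>. i < 2 \<Longrightarrow> n \<le> 1 \<Longrightarrow> \<omega> \<in> space M \<Longrightarrow> X i n \<omega> = 0 \<and> Z i n \<omega> = 0"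
    and rec: "\<And>i n. i < 2 \<Longrightarrow> n \<ge> 2 \<Longrightarrow>
       distr M borel (\<lambda>\<omega>. (X i n \<omega>, Z i n \<omega>)) =
       distr (M \<Otimes>\<^sub>M (M \<Otimes>\<^sub>M measure_pmf (binomial_pmf n (p i 0)))) borel
         (\<lambda>(\<omega>1, \<omega>2, k).
            (X 0 k \<omega>1 + X 1 (n - k) \<omega>2 + eta1 p i n,
             Z 0 k \<omega>1 + Z 1 (n - k) \<omega>2 + eta2 p i n))"
  shows "\<exists>C>0. \<forall>i<2. \<forall>n m.
           \<bar>prob_space.expectation M (Z i n) - prob_space.expectation M (Z i m)\<bar>
             \<le> C * \<bar>real n - real m\<bar>"
proof -
  interpret M: prob_space M by (rule prob)
  define a where "a i n = M.expectation (Z i n)" for i n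
  have int: "integrable M (X i n)" "integrable M (Z i n)" if "i < 2" for i n
    using M.square_integrable_imp_integrable measX measZ sqX sqZ that by blast+
  have rec_a: "a i n = binom_avg (p i 0) n (\<lambda>k. a 0 k + a 1 (n - k)) + eta2 p i n"
    if i: "i < 2" and n: "2 \<le> n" for i n
    using expectation_recursion[OF prob _ _ _ _ i rec[OF i n]] int pos[OF i, of 0]
    unfolding a_def by simp
  obtain K where K: "K \<ge> 0" "\<forall>i<2. \<forall>n\<ge>1. \<bar>eta2 p i (Suc n) - eta2 p i n\<bar> \<le> K / (real n + 1)"
    using eta2_increment_bound_uniform[of p, OF stoch pos] by blast
  have "\<exists>A. \<forall>i<2. \<forall>n. \<bar>a i (Suc n) - a i n\<bar> \<le> A"
    by (rule binomial_recursion_bounded_increments[where q="\<lambda>i. p i 0" and K=K])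
      (use pos rec_a K in auto)
  then obtain A where A: "\<And>i n. i < 2 \<Longrightarrow> \<bar>a i (Suc n) - a i n\<bar> \<le> A" by blast
  have "0 \<le> A" using A[of 0 0] by linarith
  moreover have "\<bar>a i n - a i m\<bar> \<le> (A + 1) * \<bar>real n - real m\<bar>" if "i < 2" for i n m
  proof -
    have "\<bar>a i n - a i m\<bar> \<le> A * \<bar>real n - real m\<bar>"
      by (rule abs_diff_le_of_bounded_increments) (rule A[OF that])
    also have "\<dots> \<le> (A + 1) * \<bar>real n - real m\<bar>" by (intro mult_right_mono) auto
    finally show ?thesis .
  qed
  ultimately show ?thesis unfolding a_def by (intro exI[of _ "A + 1"]) auto
qed

end
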